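(* Let $k$ be a field, let $A$ be a finite-dimensional (associative) $k$-algebra, and let $I$ be a two-sided ideal of $A$. Then $\mathrm{SR}(A/I)\le \mathrm{SR}(A)$.
   Context: For a finite-dimensional $k$-algebra $A$ with basis $e_1,\dots,e_n$ and dual basis $e_1^*,\dots,e_n^*$, its multiplication tensor is $T_A=\sum_{1\le i,j\le n} e_i^*\otimes e_j^*\otimes (e_i e_j)\in A^*\otimes A^*\otimes A$, viewed as a trilinear form on $A\times A\times A^*$. $\mathrm{SR}(A)$ denotes the slice rank of $T_A$. The slice rank of a tensor $T\in U_1\otimes U_2\otimes U_3$ is the smallest $r$ such that $T$ is a sum of $r$ tensors each of the form $u\otimes S$ with $u\in U_1, S\in U_2\otimes U_3$, or $u\in U_2$ times an element of $U_1\otimes U_3$ (suitably placed), or $u\in U_3$ times an element of $U_1\otimes U_2$ (suitably placed). *)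

theory Defs
  imports Complex_Main
begin

type_synonym ('k, 'u) vsp = "'u set \<times> ('u \<Rightarrow> 'u \<Rightarrow> 'u) \<times> ('k \<Rightarrow> 'u \<Rightarrow> 'u)"

definition vcar :: "('k, 'u) vsp \<Rightarrow> 'u set" where "vcar V = fst V"
definition vadd :: "('k, 'u) vsp \<Rightarrow> 'u \<Rightarrow> 'u \<Rightarrow> 'u" where "vadd V = fst (snd V)"
definition vscale :: "('k, 'u) vsp \<Rightarrow> 'k \<Rightarrow> 'u \<Rightarrow> 'u" where "vscale V = snd (snd V)"

definition lin_on :: "('k::field, 'u) vsp \<Rightarrow> ('u \<Rightarrow> 'k) \<Rightarrow> bool" where
  "lin_on V f \<longleftrightarrow>
     (\<forall>x\<in>vcar V. \<forall>y\<in>vcar V. f (vadd V x y) = f x + f y) \<and>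
     (\<forall>c. \<forall>x\<in>vcar V. f (vscale V c x) = c * f x)"

definition bilin_on :: "('k::field, 'u) vsp \<Rightarrow> ('k, 'v) vsp \<Rightarrow> ('u \<Rightarrow> 'v \<Rightarrow> 'k) \<Rightarrow> bool" where
  "bilin_on U V g \<longleftrightarrow>
     (\<forall>y\<in>vcar V. lin_on U (\<lambda>x. g x y)) \<and> (\<forall>x\<in>vcar U. lin_on V (g x))"

text \<open>The dual space V*: linear functionals, normalised to 0 outside the carrier (extensional).\<close>
definition dual :: "('k::field, 'u) vsp \<Rightarrow> ('k, 'u \<Rightarrow> 'k) vsp" where
  "dual V = ({f. lin_on V f \<and> (\<forall>x. x \<notin> vcar V \<longrightarrow> f x = 0)},
             (\<lambda>f g x. f x + g x),
             (\<lambda>c f x. c * f x))"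

definition slice_rank_le ::
  "('k::field, 'u) vsp \<Rightarrow> ('k, 'v) vsp \<Rightarrow> ('k, 'w) vsp \<Rightarrow> ('u \<Rightarrow> 'v \<Rightarrow> 'w \<Rightarrow> 'k) \<Rightarrow> nat \<Rightarrow> bool" where
  "slice_rank_le U1 U2 U3 T r \<longleftrightarrow>
     (\<exists>n1 n2 n3 f1 g1 f2 g2 f3 g3.
        n1 + n2 + n3 \<le> r \<and>
        (\<forall>i<n1. lin_on U1 (f1 i) \<and> bilin_on U2 U3 (g1 i)) \<and>
        (\<forall>i<n2. lin_on U2 (f2 i) \<and> bilin_on U1 U3 (g2 i)) \<and>
        (\<forall>i<n3. lin_on U3 (f3 i) \<and> bilin_on U1 U2 (g3 i)) \<and>
        (\<forall>x\<in>vcar U1. \<forall>y\<in>vcar U2. \<forall>z\<in>vcar U3.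
           T x y z = (\<Sum>i<n1. f1 i x * g1 i y z) + (\<Sum>i<n2. f2 i y * g2 i x z)
                     + (\<Sum>i<n3. f3 i z * g3 i x y)))"

definition slice_rank ::
  "('k::field, 'u) vsp \<Rightarrow> ('k, 'v) vsp \<Rightarrow> ('k, 'w) vsp \<Rightarrow> ('u \<Rightarrow> 'v \<Rightarrow> 'w \<Rightarrow> 'k) \<Rightarrow> nat" where
  "slice_rank U1 U2 U3 T = (LEAST r. slice_rank_le U1 U2 U3 T r)"

text \<open>SR of an algebra (V, mul): slice rank of its multiplication tensor, viewed as the
  trilinear form (x, y, \<phi>) \<mapsto> \<phi>(x y) on A \<times> A \<times> A*.\<close>
definition SR_alg :: "('k::field, 'u) vsp \<Rightarrow> ('u \<Rightarrow> 'u \<Rightarrow> 'u) \<Rightarrow> nat" where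
  "SR_alg V mul = slice_rank V V (dual V) (\<lambda>x y \<phi>. \<phi> (mul x y))"

definition fd_algebra :: "('k::field \<Rightarrow> 'a::ring \<Rightarrow> 'a) \<Rightarrow> bool" where
  "fd_algebra s \<longleftrightarrow>
     (\<exists>B. finite_dimensional_vector_space s B) \<and>
     (\<forall>c x y. s c (x * y) = s c x * y \<and> s c (x * y) = x * s c y)"

definition alg_space :: "('k::field \<Rightarrow> 'a::ring \<Rightarrow> 'a) \<Rightarrow> ('k, 'a) vsp" where
  "alg_space s = (UNIV, (+), s)"

definition SR :: "('k::field \<Rightarrow> 'a::ring \<Rightarrow> 'a) \<Rightarrow> nat" where
  "SR s = SR_alg (alg_space s) (*)"

definition two_sided_ideal :: "('k::field \<Rightarrow> 'a::ring \<Rightarrow> 'a) \<Rightarrow> 'a set \<Rightarrow> bool" where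
  "two_sided_ideal s I \<longleftrightarrow> module.subspace s I \<and> (\<forall>a\<in>I. \<forall>x. x * a \<in> I \<and> a * x \<in> I)"

text \<open>The quotient algebra A/I, realised on the cosets a + I.\<close>
definition quot_space :: "('k::field \<Rightarrow> 'a::ring \<Rightarrow> 'a) \<Rightarrow> 'a set \<Rightarrow> ('k, 'a set) vsp" where
  "quot_space s I =
     ({{y. y - a \<in> I} | a. True},
      (\<lambda>X Y. {z. \<exists>x\<in>X. \<exists>y\<in>Y. z - (x + y) \<in> I}),
      (\<lambda>c X. {z. \<exists>x\<in>X. z - s c x \<in> I}))"

definition quot_mult :: "'a::ring set \<Rightarrow> 'a set \<Rightarrow> 'a set \<Rightarrow> 'a set" where
  "quot_mult I X Y = {z. \<exists>x\<in>X. \<exists>y\<in>Y. z - x * y \<in> I}"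

definition SR_quot :: "('k::field \<Rightarrow> 'a::ring \<Rightarrow> 'a) \<Rightarrow> 'a set \<Rightarrow> nat" where
  "SR_quot s I = SR_alg (quot_space s I) (quot_mult I)"

end

theory Submission
  imports Defs
begin

text \<open>Choose a linear section \<sigma> of the quotient map \<pi> : A \<rightarrow> A/I. Since \<pi> is multiplicative
  and \<pi> \<circ> \<sigma> = id, the multiplication tensor of A/I is the pullback of that of A:
  \<Phi>(X Y) = (\<Phi> \<circ> \<pi>)(\<sigma> X \<sigma> Y). Pulling back along linear maps in the three slots turns every
  slice f(x) g(y, z) of a decomposition into a slice of the same kind, so slice rank can only
  decrease.\<close>

lemma vcar_dual: "vcar (dual V) = {f. lin_on V f \<and> (\<forall>x. x \<notin> vcar V \<longrightarrow> f x = 0)}"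
  and vadd_dual: "vadd (dual V) = (\<lambda>f g x. f x + g x)"
  and vscale_dual: "vscale (dual V) = (\<lambda>c f x. c * f x)"
  unfolding dual_def vcar_def vadd_def vscale_def by simp_all

lemma vcar_alg_space [simp]: "vcar (alg_space s) = UNIV"
  and vadd_alg_space [simp]: "vadd (alg_space s) = (+)"
  and vscale_alg_space [simp]: "vscale (alg_space s) = s"
  unfolding alg_space_def vcar_def vadd_def vscale_def by simp_all

lemma lin_on_alg_space_sum:
  assumes "lin_on (alg_space s) \<phi>"
  shows "\<phi> (sum g F) = (\<Sum>i\<in>F. \<phi> (g i))"
proof -
  have add: "\<phi> (x + y) = \<phi> x + \<phi> y" for x y
    using assms unfolding lin_on_def by simp
  have "\<phi> 0 = 0"
    using add[of 0 0] by (metis add.right_neutral add_left_cancel)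
  then show ?thesis
    by (induction F rule: infinite_finite_induct) (simp_all add: add)
qed

lemma lin_on_alg_space_scale:
  "lin_on (alg_space s) \<phi> \<Longrightarrow> \<phi> (s c x) = c * \<phi> x"
  unfolding lin_on_def by simp

definition lin_map_on :: "('k::field, 'u) vsp \<Rightarrow> ('k, 'v) vsp \<Rightarrow> ('u \<Rightarrow> 'v) \<Rightarrow> bool" where
  "lin_map_on U V h \<longleftrightarrow>
     (\<forall>x\<in>vcar U. h x \<in> vcar V) \<and>
     (\<forall>x\<in>vcar U. \<forall>y\<in>vcar U. h (vadd U x y) = vadd V (h x) (h y)) \<and>
     (\<forall>c. \<forall>x\<in>vcar U. h (vscale U c x) = vscale V c (h x))"

lemma lin_on_compose:
  "lin_on V f \<Longrightarrow> lin_map_on U V h \<Longrightarrow> lin_on U (\<lambda>x. f (h x))"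
  unfolding lin_on_def lin_map_on_def by simp

lemma bilin_on_compose:
  assumes "bilin_on V W g" and "lin_map_on U V h" and "lin_map_on U' W h'"
  shows "bilin_on U U' (\<lambda>x y. g (h x) (h' y))"
  unfolding bilin_on_def
proof (intro conjI ballI)
  fix y assume "y \<in> vcar U'"
  then have "h' y \<in> vcar W"
    using assms(3) unfolding lin_map_on_def by blast
  then show "lin_on U (\<lambda>x. g (h x) (h' y))"
    using assms(1,2) lin_on_compose unfolding bilin_on_def by blast
next
  fix x assume "x \<in> vcar U"
  then have "h x \<in> vcar V"
    using assms(2) unfolding lin_map_on_def by blast
  then show "lin_on U' (\<lambda>y. g (h x) (h' y))"
    using assms(1,3) lin_on_compose unfolding bilin_on_def by blast
qed

text \<open>Dual vectors vanish off the carrier, so the pullback is only a dual vector if U has full carrier.\<close>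

lemma lin_map_dual_pullback:
  assumes "lin_map_on U V h" and "vcar U = UNIV"
  shows "lin_map_on (dual V) (dual U) (\<lambda>\<Phi> x. \<Phi> (h x))"
  using assms lin_on_compose[OF _ assms(1)]
  unfolding lin_map_on_def vcar_dual vadd_dual vscale_dual by simp

lemma slice_rank_leI:
  assumes "n1 + n2 + n3 \<le> r"
    and "\<forall>i<n1. lin_on U1 (f1 i) \<and> bilin_on U2 U3 (g1 i)"
    and "\<forall>i<n2. lin_on U2 (f2 i) \<and> bilin_on U1 U3 (g2 i)"
    and "\<forall>i<n3. lin_on U3 (f3 i) \<and> bilin_on U1 U2 (g3 i)"
    and "\<forall>x\<in>vcar U1. \<forall>y\<in>vcar U2. \<forall>z\<in>vcar U3.
           T x y z = (\<Sum>i<n1. f1 i x * g1 i y z) + (\<Sum>i<n2. f2 i y * g2 i x z)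
                     + (\<Sum>i<n3. f3 i z * g3 i x y)"
  shows "slice_rank_le U1 U2 U3 T r"
  using assms unfolding slice_rank_le_def by blast

lemma slice_rank_le_pullback:
  assumes T: "slice_rank_le U1 U2 U3 T r"
    and h1: "lin_map_on V1 U1 h1" and h2: "lin_map_on V2 U2 h2" and h3: "lin_map_on V3 U3 h3"
    and T': "\<forall>x\<in>vcar V1. \<forall>y\<in>vcar V2. \<forall>z\<in>vcar V3. T' x y z = T (h1 x) (h2 y) (h3 z)"
  shows "slice_rank_le V1 V2 V3 T' r"
proof -
  obtain n1 n2 n3 f1 g1 f2 g2 f3 g3 where
    n: "n1 + n2 + n3 \<le> r" and
    c1: "\<forall>i<n1. lin_on U1 (f1 i) \<and> bilin_on U2 U3 (g1 i)" and
    c2: "\<forall>i<n2. lin_on U2 (f2 i) \<and> bilin_on U1 U3 (g2 i)" and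
    c3: "\<forall>i<n3. lin_on U3 (f3 i) \<and> bilin_on U1 U2 (g3 i)" and
    eq: "\<forall>x\<in>vcar U1. \<forall>y\<in>vcar U2. \<forall>z\<in>vcar U3.
           T x y z = (\<Sum>i<n1. f1 i x * g1 i y z) + (\<Sum>i<n2. f2 i y * g2 i x z)
                     + (\<Sum>i<n3. f3 i z * g3 i x y)"
    using T unfolding slice_rank_le_def by blast
  have "h1 x \<in> vcar U1" "h2 y \<in> vcar U2" "h3 z \<in> vcar U3"
    if "x \<in> vcar V1" "y \<in> vcar V2" "z \<in> vcar V3" for x y z
    using that h1 h2 h3 unfolding lin_map_on_def by auto
  then have eq': "\<forall>x\<in>vcar V1. \<forall>y\<in>vcar V2. \<forall>z\<in>vcar V3.
      T' x y z = (\<Sum>i<n1. f1 i (h1 x) * g1 i (h2 y) (h3 z))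
                 + (\<Sum>i<n2. f2 i (h2 y) * g2 i (h1 x) (h3 z))
                 + (\<Sum>i<n3. f3 i (h3 z) * g3 i (h1 x) (h2 y))"
    using T' eq by simp
  have slices: "\<forall>i<n1. lin_on V1 (\<lambda>x. f1 i (h1 x)) \<and> bilin_on V2 V3 (\<lambda>y z. g1 i (h2 y) (h3 z))"
    "\<forall>i<n2. lin_on V2 (\<lambda>y. f2 i (h2 y)) \<and> bilin_on V1 V3 (\<lambda>x z. g2 i (h1 x) (h3 z))"
    "\<forall>i<n3. lin_on V3 (\<lambda>z. f3 i (h3 z)) \<and> bilin_on V1 V2 (\<lambda>x y. g3 i (h1 x) (h2 y))"
    using c1 c2 c3 h1 h2 h3 by (auto intro: lin_on_compose bilin_on_compose)
  show ?thesis
    by (rule slice_rank_leI[OF n slices eq'])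
qed

lemma slice_rank_pullback_le:
  assumes "slice_rank_le U1 U2 U3 T r"
    and "lin_map_on V1 U1 h1" and "lin_map_on V2 U2 h2" and "lin_map_on V3 U3 h3"
    and "\<forall>x\<in>vcar V1. \<forall>y\<in>vcar V2. \<forall>z\<in>vcar V3. T' x y z = T (h1 x) (h2 y) (h3 z)"
  shows "slice_rank V1 V2 V3 T' \<le> slice_rank U1 U2 U3 T"
proof -
  have "slice_rank_le U1 U2 U3 T (slice_rank U1 U2 U3 T)"
    unfolding slice_rank_def using assms(1) by (rule LeastI)
  then have "slice_rank_le V1 V2 V3 T' (slice_rank U1 U2 U3 T)"
    using assms(2-) by (rule slice_rank_le_pullback)
  then show ?thesis
    unfolding slice_rank_def by (rule Least_le)
qed

lemma slice_rank_le_dim_first_factor: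
  fixes s :: "'k::field \<Rightarrow> 'a::ring \<Rightarrow> 'a"
  assumes fd: "finite_dimensional_vector_space s B"
    and lin: "\<forall>y\<in>vcar U2. \<forall>z\<in>vcar U3. lin_on (alg_space s) (\<lambda>x. T x y z)"
    and bilin: "\<forall>b\<in>B. bilin_on U2 U3 (T b)"
  shows "slice_rank_le (alg_space s) U2 U3 T (card B)"
proof -
  interpret finite_dimensional_vector_space s B by (rule fd)
  obtain e where e: "bij_betw e {..<card B} B"
    using ex_bij_betw_nat_finite[OF finite_Basis] by (auto simp: atLeast0LessThan)
  have in_span: "x \<in> span B" for x
    using span_Basis by simp
  have coord_lin: "lin_on (alg_space s) (\<lambda>x. representation B x (e i))" for i
    unfolding lin_on_def
    using representation_add[OF independent_Basis in_span in_span]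
      representation_scale[OF independent_Basis in_span] by simp
  have slices: "bilin_on U2 U3 (T (e i))" if "i < card B" for i
    using bilin e that unfolding bij_betw_def by auto
  have expand: "T x y z = (\<Sum>i<card B. representation B x (e i) * T (e i) y z)"
    if "y \<in> vcar U2" "z \<in> vcar U3" for x y z
  proof -
    have lin_yz: "lin_on (alg_space s) (\<lambda>x. T x y z)"
      using lin that by blast
    have "T x y z = T (\<Sum>b\<in>B. s (representation B x b) b) y z"
      using sum_representation_eq[OF independent_Basis in_span finite_Basis order_refl] by simp
    also have "\<dots> = (\<Sum>b\<in>B. representation B x b * T b y z)"
      using lin_on_alg_space_sum[OF lin_yz, of "\<lambda>b. s (representation B x b) b"]
        lin_on_alg_space_scale[OF lin_yz] by simp
    also have "\<dots> = (\<Sum>i<card B. representation B x (e i) * T (e i) y z)"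
      using sum.reindex_bij_betw[OF e, of "\<lambda>b. representation B x b * T b y z"] by simp
    finally show ?thesis .
  qed
  show ?thesis
    by (rule slice_rank_leI[of "card B" 0 0]) (use coord_lin slices expand in auto)
qed

lemma slice_rank_le_mult_tensor:
  fixes s :: "'k::field \<Rightarrow> 'a::ring \<Rightarrow> 'a"
  assumes fd: "finite_dimensional_vector_space s B"
    and scale_mult: "\<forall>c x y. s c (x * y) = s c x * y \<and> s c (x * y) = x * s c y"
  shows "slice_rank_le (alg_space s) (alg_space s) (dual (alg_space s))
           (\<lambda>x y \<phi>. \<phi> (x * y)) (card B)"
proof (rule slice_rank_le_dim_first_factor[OF fd])
  have scale_mult': "s c x * y = s c (x * y)" "x * s c y = s c (x * y)" for c x y
    using scale_mult by metis+
  have dual_lin: "\<phi> (x + y) = \<phi> x + \<phi> y" "\<phi> (s c x) = c * \<phi> x"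
    if "\<phi> \<in> vcar (dual (alg_space s))" for \<phi> x y c
    using that unfolding vcar_dual lin_on_def by auto
  show "\<forall>y\<in>vcar (alg_space s). \<forall>\<phi>\<in>vcar (dual (alg_space s)).
          lin_on (alg_space s) (\<lambda>x. \<phi> (x * y))"
    unfolding lin_on_def using dual_lin by (simp add: distrib_right scale_mult')
  show "\<forall>b\<in>B. bilin_on (alg_space s) (dual (alg_space s)) (\<lambda>y \<phi>. \<phi> (b * y))"
    unfolding bilin_on_def lin_on_def vadd_dual vscale_dual
    using dual_lin by (simp add: distrib_left scale_mult')
qed

locale algebra_ideal = vector_space s for s :: "'k::field \<Rightarrow> 'a::ring \<Rightarrow> 'a" +
  fixes I :: "'a set"
  assumes two_sided_ideal: "two_sided_ideal s I"
begin

lemma ideal_subspace: "subspace I"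
  using two_sided_ideal unfolding two_sided_ideal_def by simp

lemma ideal_mult_left: "a \<in> I \<Longrightarrow> x * a \<in> I"
  and ideal_mult_right: "a \<in> I \<Longrightarrow> a * x \<in> I"
  using two_sided_ideal unfolding two_sided_ideal_def by blast+

lemmas ideal_0 = subspace_0[OF ideal_subspace]
  and ideal_add = subspace_add[OF ideal_subspace]
  and ideal_diff = subspace_diff[OF ideal_subspace]
  and ideal_scale = subspace_scale[OF ideal_subspace]

definition coset :: "'a \<Rightarrow> 'a set" where
  "coset a = {y. y - a \<in> I}"

lemma mem_coset_iff [simp]: "y \<in> coset a \<longleftrightarrow> y - a \<in> I"
  unfolding coset_def by simp

lemma coset_eqI: "a - b \<in> I \<Longrightarrow> coset a = coset b"
  using ideal_add ideal_diff unfolding coset_def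
  by (metis (no_types, lifting) diff_add_cancel diff_diff_eq2)

lemma vcar_quot_space: "vcar (quot_space s I) = range coset"
  unfolding quot_space_def vcar_def coset_def by auto

lemma coset_binop:
  assumes "\<And>x y. x - a \<in> I \<Longrightarrow> y - b \<in> I \<Longrightarrow> f x y - f a b \<in> I"
  shows "{z. \<exists>x\<in>coset a. \<exists>y\<in>coset b. z - f x y \<in> I} = coset (f a b)"
proof (intro set_eqI iffI)
  fix z assume "z \<in> {z. \<exists>x\<in>coset a. \<exists>y\<in>coset b. z - f x y \<in> I}"
  then obtain x y where "x - a \<in> I" "y - b \<in> I" "z - f x y \<in> I"
    by auto
  then have "(z - f x y) + (f x y - f a b) \<in> I"
    using assms ideal_add by blast
  then show "z \<in> coset (f a b)"
    by simp
next
  fix z assume "z \<in> coset (f a b)"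
  then show "z \<in> {z. \<exists>x\<in>coset a. \<exists>y\<in>coset b. z - f x y \<in> I}"
    using ideal_0 by force
qed

lemma vadd_quot_space_coset: "vadd (quot_space s I) (coset a) (coset b) = coset (a + b)"
proof -
  have "{z. \<exists>x\<in>coset a. \<exists>y\<in>coset b. z - (x + y) \<in> I} = coset (a + b)"
  proof (rule coset_binop)
    fix x y assume "x - a \<in> I" "y - b \<in> I"
    then have "(x - a) + (y - b) \<in> I"
      by (rule ideal_add)
    then show "(x + y) - (a + b) \<in> I"
      by (simp add: algebra_simps)
  qed
  then show ?thesis
    unfolding quot_space_def vadd_def by simp
qed

lemma vscale_quot_space_coset: "vscale (quot_space s I) c (coset a) = coset (s c a)"
proof (intro set_eqI iffI)
  fix z assume "z \<in> vscale (quot_space s I) c (coset a)"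
  then obtain x where "x - a \<in> I" "z - s c x \<in> I"
    unfolding quot_space_def vscale_def by auto
  then have "(z - s c x) + s c (x - a) \<in> I"
    using ideal_add ideal_scale by blast
  then show "z \<in> coset (s c a)"
    by (simp add: scale_right_diff_distrib)
next
  fix z assume "z \<in> coset (s c a)"
  then show "z \<in> vscale (quot_space s I) c (coset a)"
    unfolding quot_space_def vscale_def using ideal_0 by force
qed

lemma quot_mult_coset: "quot_mult I (coset a) (coset b) = coset (a * b)"
  unfolding quot_mult_def
proof (rule coset_binop)
  fix x y assume "x - a \<in> I" "y - b \<in> I"
  then have "x * (y - b) + (x - a) * b \<in> I"
    using ideal_add ideal_mult_left ideal_mult_right by blast
  then show "x * y - a * b \<in> I"
    by (simp add: algebra_simps)
qed

lemma lin_map_coset: "lin_map_on (alg_space s) (quot_space s I) coset"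
  unfolding lin_map_on_def vcar_quot_space
  by (simp add: vadd_quot_space_coset vscale_quot_space_coset)

lemma quotient_linear_section:
  obtains \<sigma> where "lin_map_on (quot_space s I) (alg_space s) \<sigma>"
    and "\<And>X. X \<in> vcar (quot_space s I) \<Longrightarrow> coset (\<sigma> X) = X"
proof -
  interpret pair: vector_space_pair s s ..
  obtain r where r_into: "range r \<subseteq> I" and r_linear: "Vector_Spaces.linear s s r"
    and r_id: "\<forall>v\<in>I. r v = v"
    using pair.linear_exists_left_inverse_on[OF linear_id ideal_subspace] by auto
  interpret r: Vector_Spaces.linear s s r by (rule r_linear)
  \<comment> \<open>Independent of the chosen representative, since id - r vanishes on I.\<close>
  define \<sigma> where "\<sigma> X = (let x = SOME x. x \<in> X in x - r x)" for X
  have \<sigma>_coset: "\<sigma> (coset a) = a - r a" for a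
  proof -
    let ?x = "SOME x. x \<in> coset a"
    have "?x - a \<in> I"
      using someI[of "\<lambda>x. x \<in> coset a" a] ideal_0 by simp
    then have "r ?x - r a = ?x - a"
      using r_id r.diff by metis
    then show ?thesis
      unfolding \<sigma>_def Let_def by (simp add: algebra_simps)
  qed
  have "lin_map_on (quot_space s I) (alg_space s) \<sigma>"
    unfolding lin_map_on_def vcar_quot_space
    by (simp add: vadd_quot_space_coset vscale_quot_space_coset \<sigma>_coset r.add r.scale
        scale_right_diff_distrib)
  moreover have "coset (\<sigma> X) = X" if X: "X \<in> vcar (quot_space s I)" for X
  proof -
    obtain a where "X = coset a"
      using X vcar_quot_space by auto
    moreover have "(a - r a) - a \<in> I"
      using r_into subspace_neg[OF ideal_subspace] by auto
    ultimately show ?thesis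
      by (simp add: \<sigma>_coset coset_eqI)
  qed
  ultimately show ?thesis
    using that by blast
qed

lemma SR_quot_le:
  assumes "slice_rank_le (alg_space s) (alg_space s) (dual (alg_space s)) (\<lambda>x y \<phi>. \<phi> (x * y)) r"
  shows "SR_quot s I \<le> SR s"
proof -
  obtain \<sigma> where \<sigma>_lin: "lin_map_on (quot_space s I) (alg_space s) \<sigma>"
    and \<sigma>_section: "\<And>X. X \<in> vcar (quot_space s I) \<Longrightarrow> coset (\<sigma> X) = X"
    using quotient_linear_section by blast
  have pullback_lin: "lin_map_on (dual (quot_space s I)) (dual (alg_space s)) (\<lambda>\<Phi> x. \<Phi> (coset x))"
    by (rule lin_map_dual_pullback[OF lin_map_coset]) simp
  have "\<forall>X\<in>vcar (quot_space s I). \<forall>Y\<in>vcar (quot_space s I). \<forall>\<Phi>\<in>vcar (dual (quot_space s I)).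
          \<Phi> (quot_mult I X Y) = \<Phi> (coset (\<sigma> X * \<sigma> Y))"
    using \<sigma>_section by (metis quot_mult_coset)
  then show ?thesis
    unfolding SR_quot_def SR_def SR_alg_def
    using slice_rank_pullback_le[OF assms \<sigma>_lin \<sigma>_lin pullback_lin] by simp
qed

end

theorem lemma2p2:
  fixes s :: "'k::field \<Rightarrow> 'a::ring \<Rightarrow> 'a" and I :: "'a set"
  assumes "fd_algebra s"
    and "two_sided_ideal s I"
  shows "SR_quot s I \<le> SR s"
proof -
  obtain B where fd: "finite_dimensional_vector_space s B"
    and scale_mult: "\<forall>c x y. s c (x * y) = s c x * y \<and> s c (x * y) = x * s c y"
    using assms(1) unfolding fd_algebra_def by blast
  interpret algebra_ideal s I
    using fd assms(2) by (simp add: algebra_ideal_def algebra_ideal_axioms_def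
        finite_dimensional_vector_space_def)
  show ?thesis
    using slice_rank_le_mult_tensor[OF fd scale_mult] by (rule SR_quot_le)
qed

end
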